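(* Let $G$ be a connected graph with vertex set $\{u_1,\dots,u_n\}$, $n\ge2$, having no pair of distinct true twins, and let $\mathcal{H}=\{H_1,\dots,H_n\}$ be a family of non-empty graphs, $H_i$ of order $n_i$. Then $\dim_l(G\circ\mathcal{H})=\sum_{i=1}^n n_i-n$ if and only if $H_i\cong K_{n_i}$ for all $i$.
   Context: All graphs are finite and simple; non-empty means having at least one edge. True twins: distinct vertices $x,y$ with $N[x]=N[y]$. For a connected graph $G$, $\dim_l(G)$ is the minimum size of $S\subseteq V(G)$ such that for every two adjacent vertices $x,y$ there is $s\in S$ with $d_G(s,x)\ne d_G(s,y)$ ($d_G$ the shortest-path distance). Lexicographic product $G\circ\mathcal{H}$: vertex set $\bigcup_i\{u_i\}\times V(H_i)$, $(u_i,v)\sim(u_j,w)$ iff $u_iu_j\in E(G)$, or $i=j$ and $vw\in E(H_i)$. *)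

theory Defs
  imports Main
begin

type_synonym 'a graph = "'a set \<times> ('a \<Rightarrow> 'a \<Rightarrow> bool)"

definition verts :: "'a graph \<Rightarrow> 'a set" where "verts G = fst G"
definition adj :: "'a graph \<Rightarrow> 'a \<Rightarrow> 'a \<Rightarrow> bool" where "adj G = snd G"

definition simple_graph :: "'a graph \<Rightarrow> bool" where
  "simple_graph G \<longleftrightarrow> finite (verts G)
     \<and> (\<forall>x y. adj G x y \<longrightarrow> x \<in> verts G \<and> y \<in> verts G)
     \<and> (\<forall>x y. adj G x y \<longrightarrow> adj G y x)
     \<and> (\<forall>x. \<not> adj G x x)"

definition nonempty_graph :: "'a graph \<Rightarrow> bool" where
  "nonempty_graph G \<longleftrightarrow> (\<exists>x y. adj G x y)"

definition walk :: "'a graph \<Rightarrow> 'a list \<Rightarrow> bool" where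
  "walk G p \<longleftrightarrow> p \<noteq> [] \<and> set p \<subseteq> verts G
     \<and> (\<forall>i. Suc i < length p \<longrightarrow> adj G (p ! i) (p ! Suc i))"

definition connected_graph :: "'a graph \<Rightarrow> bool" where
  "connected_graph G \<longleftrightarrow> (\<forall>x\<in>verts G. \<forall>y\<in>verts G.
      \<exists>p. walk G p \<and> hd p = x \<and> last p = y)"

definition dist :: "'a graph \<Rightarrow> 'a \<Rightarrow> 'a \<Rightarrow> nat" where
  "dist G x y = (LEAST n. \<exists>p. walk G p \<and> hd p = x \<and> last p = y \<and> length p = Suc n)"

definition closed_nbhd :: "'a graph \<Rightarrow> 'a \<Rightarrow> 'a set" where
  "closed_nbhd G x = {y \<in> verts G. adj G x y} \<union> {x}"

definition true_twins :: "'a graph \<Rightarrow> 'a \<Rightarrow> 'a \<Rightarrow> bool" where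
  "true_twins G x y \<longleftrightarrow> x \<in> verts G \<and> y \<in> verts G \<and> x \<noteq> y
     \<and> closed_nbhd G x = closed_nbhd G y"

definition local_resolving_set :: "'a graph \<Rightarrow> 'a set \<Rightarrow> bool" where
  "local_resolving_set G S \<longleftrightarrow> S \<subseteq> verts G \<and>
     (\<forall>x\<in>verts G. \<forall>y\<in>verts G. adj G x y \<longrightarrow> (\<exists>s\<in>S. dist G s x \<noteq> dist G s y))"

definition local_metric_dim :: "'a graph \<Rightarrow> nat" where
  "local_metric_dim G = (LEAST k. \<exists>S. local_resolving_set G S \<and> card S = k)"

definition lex_product :: "'a graph \<Rightarrow> ('a \<Rightarrow> 'b graph) \<Rightarrow> ('a \<times> 'b) graph" where
  "lex_product G H =
     (SIGMA u:verts G. verts (H u),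
      \<lambda>(u, v) (u', w). (u, v) \<in> (SIGMA u:verts G. verts (H u))
          \<and> (u', w) \<in> (SIGMA u:verts G. verts (H u))
          \<and> (adj G u u' \<or> (u = u' \<and> adj (H u) v w)))"

definition complete_graph :: "nat \<Rightarrow> nat graph" where
  "complete_graph n = ({0..<n}, \<lambda>i j. i < n \<and> j < n \<and> i \<noteq> j)"

definition graph_iso :: "'a graph \<Rightarrow> 'b graph \<Rightarrow> bool" where
  "graph_iso G H \<longleftrightarrow> (\<exists>f. bij_betw f (verts G) (verts H)
     \<and> (\<forall>x\<in>verts G. \<forall>y\<in>verts G. adj G x y \<longleftrightarrow> adj H (f x) (f y)))"

end

theory Submission
  imports Defs "HOL-Combinatorics.Transposition"
begin

text \<open>
  Two vertices of a complete fibre of the lexicographic product are true twins, and swapping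
  true twins is an automorphism; hence every local resolving set misses at most one vertex of
  each complete fibre, so the local metric dimension is at least the sum of the n_i - 1.
  Conversely, deleting an independent set from every fibre leaves a local resolving set: an
  edge inside a fibre is resolved by one of its endpoints, and an edge between the fibres of
  adjacent u and u' by any vertex over a vertex of G that lies in exactly one of N[u] and N[u'],
  which exists because G has no true twins. Deleting one vertex per fibre attains the bound; if
  some fibre is not complete, deleting a non-adjacent pair from it beats the bound by one.
  Only distances 0 and 1 occur.
\<close>

lemma verts_lex_product: "verts (lex_product G H) = (SIGMA u:verts G. verts (H u))"
  by (simp add: lex_product_def verts_def)

lemma adj_lex_product:
  "adj (lex_product G H) (u, v) (u', w) \<longleftrightarrow>
     u \<in> verts G \<and> v \<in> verts (H u) \<and> u' \<in> verts G \<and> w \<in> verts (H u')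
     \<and> (adj G u u' \<or> u = u' \<and> adj (H u) v w)"
  by (simp add: lex_product_def adj_def verts_def)

lemma simple_graph_lex_product:
  assumes "simple_graph G" and "\<forall>u\<in>verts G. simple_graph (H u)"
  shows "simple_graph (lex_product G H)"
  using assms unfolding simple_graph_def
  by (auto simp: verts_lex_product adj_lex_product)

lemma card_verts_ge_2:
  assumes "simple_graph H" and "nonempty_graph H"
  shows "2 \<le> card (verts H)"
proof -
  obtain x y where "adj H x y" using assms(2) by (auto simp: nonempty_graph_def)
  with assms(1) have "{x, y} \<subseteq> verts H" "x \<noteq> y" "finite (verts H)"
    by (auto simp: simple_graph_def)
  then show ?thesis by (metis card_2_iff card_mono)
qed

lemma dist_self: "x \<in> verts P \<Longrightarrow> dist P x x = 0"
  unfolding dist_def by (rule Least_eq_0, rule exI[of _ "[x]"]) (simp add: walk_def)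

lemma dist_eq_1_if_adj:
  assumes "simple_graph P" and "adj P x y"
  shows "dist P x y = 1"
  unfolding dist_def
proof (rule Least_equality)
  have "x \<in> verts P" "y \<in> verts P" using assms by (auto simp: simple_graph_def)
  then show "\<exists>p. walk P p \<and> hd p = x \<and> last p = y \<and> length p = Suc 1"
    using assms(2) by (intro exI[of _ "[x, y]"]) (auto simp: walk_def nth_Cons split: nat.splits)
next
  fix m assume "\<exists>p. walk P p \<and> hd p = x \<and> last p = y \<and> length p = Suc m"
  then obtain p where "hd p = x" "last p = y" "length p = Suc m" by blast
  moreover have "x \<noteq> y" using assms by (auto simp: simple_graph_def)
  ultimately show "1 \<le> m" by (cases p) (auto simp: Suc_le_eq split: if_splits)
qed

lemma dist_neq_1_if_not_adj:
  assumes "walk P p" "hd p = x" "last p = y" and "\<not> adj P x y"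
  shows "dist P x y \<noteq> 1"
proof
  assume "dist P x y = 1"
  moreover have "\<exists>q. walk P q \<and> hd q = x \<and> last q = y \<and> length q = Suc (dist P x y)"
    unfolding dist_def
    by (rule LeastI[of _ "length p - 1"]) (use assms in \<open>auto simp: walk_def\<close>)
  ultimately obtain q where q: "walk P q" "hd q = x" "last q = y" "length q = 2"
    by auto
  then obtain a b where "q = [a, b]"
    by (cases q; cases "tl q") auto
  with q assms(4) show False
    by (auto simp: walk_def dest: spec[of _ 0])
qed

lemma dist_endpoint_neq:
  assumes "simple_graph P" and "adj P x y" and "s \<in> {x, y}"
  shows "dist P s x \<noteq> dist P s y"
proof -
  have "adj P y x" "x \<in> verts P" "y \<in> verts P"
    using assms(1,2) by (auto simp: simple_graph_def)
  then show ?thesis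
    using assms by (auto simp: dist_self dist_eq_1_if_adj)
qed

lemma dist_neq_if_adj_not_adj:
  assumes "simple_graph P" and "adj P s x" "adj P x y" and "\<not> adj P s y"
  shows "dist P s x \<noteq> dist P s y"
proof -
  have "walk P [s, x, y]"
    using assms by (auto simp: walk_def simple_graph_def nth_Cons split: nat.splits)
  then have "dist P s y \<noteq> 1" using assms(4) by (intro dist_neq_1_if_not_adj) auto
  then show ?thesis using dist_eq_1_if_adj[OF assms(1,2)] by simp
qed

lemma dist_involution_invariant:
  assumes "\<And>a. \<phi> (\<phi> a) = a" and "\<And>a. a \<in> verts P \<Longrightarrow> \<phi> a \<in> verts P"
    and "\<And>a b. adj P a b \<Longrightarrow> adj P (\<phi> a) (\<phi> b)"
  shows "dist P (\<phi> a) (\<phi> b) = dist P a b"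
proof -
  have walk_map: "walk P (map \<phi> p)" if "walk P p" for p
    using that assms(2,3) unfolding walk_def by auto
  have map_walk: "(\<exists>p. walk P p \<and> hd p = \<phi> x \<and> last p = \<phi> y \<and> length p = n)
      \<longleftrightarrow> (\<exists>p. walk P p \<and> hd p = x \<and> last p = y \<and> length p = n)" for x y n
  proof
    assume "\<exists>p. walk P p \<and> hd p = \<phi> x \<and> last p = \<phi> y \<and> length p = n"
    then obtain p where p: "walk P p" "hd p = \<phi> x" "last p = \<phi> y" "length p = n" by blast
    then have "p \<noteq> []" by (auto simp: walk_def)
    with p show "\<exists>p. walk P p \<and> hd p = x \<and> last p = y \<and> length p = n"
      using walk_map[of p] assms(1) by (intro exI[of _ "map \<phi> p"]) (auto simp: hd_map last_map)
  next
    assume "\<exists>p. walk P p \<and> hd p = x \<and> last p = y \<and> length p = n"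
    then obtain p where p: "walk P p" "hd p = x" "last p = y" "length p = n" by blast
    then have "p \<noteq> []" by (auto simp: walk_def)
    with p show "\<exists>p. walk P p \<and> hd p = \<phi> x \<and> last p = \<phi> y \<and> length p = n"
      using walk_map[of p] by (intro exI[of _ "map \<phi> p"]) (auto simp: hd_map last_map)
  qed
  show ?thesis unfolding dist_def map_walk ..
qed

lemma true_twins_adj:
  assumes "simple_graph P" and "true_twins P x y"
  shows "adj P x y" and "\<And>z. z \<noteq> x \<Longrightarrow> z \<noteq> y \<Longrightarrow> adj P x z \<longleftrightarrow> adj P y z"
proof -
  have "y \<in> closed_nbhd P x" using assms(2) by (auto simp: true_twins_def closed_nbhd_def)
  then show "adj P x y" using assms(2) by (auto simp: true_twins_def closed_nbhd_def)
  show "adj P x z \<longleftrightarrow> adj P y z" if "z \<noteq> x" "z \<noteq> y" for z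
    using assms that unfolding true_twins_def closed_nbhd_def simple_graph_def by blast
qed

lemma dist_true_twins:
  assumes "simple_graph P" and "true_twins P x y" and "s \<noteq> x" "s \<noteq> y"
  shows "dist P s x = dist P s y"
proof -
  have xy: "adj P x y" and twin: "\<And>z. z \<noteq> x \<Longrightarrow> z \<noteq> y \<Longrightarrow> adj P x z \<longleftrightarrow> adj P y z"
    using true_twins_adj[OF assms(1,2)] by blast+
  have sym: "\<And>a b. adj P a b \<Longrightarrow> adj P b a" and irrefl: "\<And>a. \<not> adj P a a"
    using assms(1) by (auto simp: simple_graph_def)
  have "adj P (transpose x y a) (transpose x y b)" if "adj P a b" for a b
  proof -
    have "a \<noteq> b" using that irrefl by blast
    then show ?thesis
      using that xy twin[of a] twin[of b] sym[of a b] sym[of x a] sym[of y a] sym[of b a]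
      unfolding transpose_def by (simp only: if_split_asm split: if_split) blast
  qed
  moreover have "transpose x y a \<in> verts P" if "a \<in> verts P" for a
    using that assms(2) by (auto simp: transpose_def true_twins_def)
  ultimately have "dist P (transpose x y s) (transpose x y x) = dist P s x"
    by (intro dist_involution_invariant) auto
  then show ?thesis using assms(3,4) by simp
qed

lemma local_resolving_set_meets_true_twins:
  assumes "simple_graph P" and "local_resolving_set P S" and "true_twins P x y"
  shows "x \<in> S \<or> y \<in> S"
proof -
  have "x \<in> verts P" "y \<in> verts P" "adj P x y"
    using assms(3) true_twins_adj[OF assms(1,3)] by (auto simp: true_twins_def)
  then obtain s where "s \<in> S" "dist P s x \<noteq> dist P s y"
    using assms(2) unfolding local_resolving_set_def by blast
  then show ?thesis using dist_true_twins[OF assms(1,3)] by metis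
qed

lemma local_resolving_set_verts:
  assumes "simple_graph P"
  shows "local_resolving_set P (verts P)"
  unfolding local_resolving_set_def
proof (intro conjI ballI impI)
  fix x y assume "x \<in> verts P" "y \<in> verts P" "adj P x y"
  then show "\<exists>s\<in>verts P. dist P s x \<noteq> dist P s y"
    using dist_endpoint_neq[OF assms, of x y x] by blast
qed simp

lemma local_metric_dim_le:
  "local_resolving_set P S \<Longrightarrow> local_metric_dim P \<le> card S"
  unfolding local_metric_dim_def by (rule Least_le) blast

lemma local_metric_dim_ge:
  assumes "simple_graph P" and "\<And>S. local_resolving_set P S \<Longrightarrow> k \<le> card S"
  shows "k \<le> local_metric_dim P"
proof -
  have "\<exists>S. local_resolving_set P S \<and> card S = local_metric_dim P"
    unfolding local_metric_dim_def
    by (rule LeastI_ex) (use local_resolving_set_verts[OF assms(1)] in blast)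
  then obtain S where "local_resolving_set P S" "card S = local_metric_dim P" by blast
  with assms(2) show ?thesis by metis
qed

lemma card_Sigma_Diff:
  assumes "finite A" and "\<And>a. a \<in> A \<Longrightarrow> finite (B a)" and "\<And>a. a \<in> A \<Longrightarrow> D a \<subseteq> B a"
  shows "card (SIGMA a:A. B a - D a) = (\<Sum>a\<in>A. card (B a) - card (D a))"
proof -
  have "card (B a - D a) = card (B a) - card (D a)" if "a \<in> A" for a
    using assms(2,3)[OF that] by (meson card_Diff_subset finite_subset)
  then show ?thesis using assms by simp
qed

lemma of_nat_sum_diff_1:
  assumes "\<forall>a\<in>A. 1 \<le> f a"
  shows "int (\<Sum>a\<in>A. f a - 1) = (\<Sum>a\<in>A. int (f a)) - int (card A)"
proof -
  have "int (\<Sum>a\<in>A. f a - 1) = (\<Sum>a\<in>A. int (f a) - 1)"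
    unfolding of_nat_sum using assms by (intro sum.cong) (auto simp: of_nat_diff)
  then show ?thesis by (simp add: sum_subtractf)
qed

definition is_complete :: "'a graph \<Rightarrow> bool" where
  "is_complete H \<longleftrightarrow> (\<forall>a\<in>verts H. \<forall>b\<in>verts H. adj H a b \<longleftrightarrow> a \<noteq> b)"

lemma graph_iso_complete_graph_iff:
  assumes "simple_graph H"
  shows "graph_iso H (complete_graph (card (verts H))) \<longleftrightarrow> is_complete H"
proof
  assume "graph_iso H (complete_graph (card (verts H)))"
  then obtain f where "inj_on f (verts H)" "f ` verts H = {0..<card (verts H)}"
    "\<forall>x\<in>verts H. \<forall>y\<in>verts H. adj H x y \<longleftrightarrow> adj (complete_graph (card (verts H))) (f x) (f y)"
    by (auto simp: graph_iso_def complete_graph_def verts_def bij_betw_def)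
  then show "is_complete H"
    unfolding is_complete_def complete_graph_def adj_def inj_on_def by auto
next
  assume complete: "is_complete H"
  have "finite (verts H)" using assms by (simp add: simple_graph_def)
  then obtain f where "bij_betw f (verts H) {0..<card (verts H)}"
    using ex_bij_betw_finite_nat by blast
  with complete show "graph_iso H (complete_graph (card (verts H)))"
    unfolding graph_iso_def is_complete_def
    by (intro exI[of _ f]) (auto simp: complete_graph_def adj_def verts_def bij_betw_def inj_on_def)
qed

lemma true_twins_lex_product:
  assumes "simple_graph G" and "u \<in> verts G" and "is_complete (H u)"
    and "a \<in> verts (H u)" "b \<in> verts (H u)" "a \<noteq> b"
  shows "true_twins (lex_product G H) (u, a) (u, b)"
proof -
  have "closed_nbhd (lex_product G H) (u, c) =
      {p \<in> verts (lex_product G H). adj G u (fst p)} \<union> {u} \<times> verts (H u)"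
    if "c \<in> verts (H u)" for c
    using assms(1-3) that
    by (auto simp: closed_nbhd_def verts_lex_product adj_lex_product is_complete_def simple_graph_def)
  then show ?thesis
    using assms(2,4-6) by (simp add: true_twins_def verts_lex_product)
qed

lemma card_local_resolving_set_lex_product_complete:
  assumes "simple_graph G" and "\<forall>u\<in>verts G. simple_graph (H u) \<and> is_complete (H u)"
    and "local_resolving_set (lex_product G H) S"
  shows "(\<Sum>u\<in>verts G. card (verts (H u)) - 1) \<le> card S"
proof -
  define T where "T u = {v. (u, v) \<in> S}" for u
  have "S \<subseteq> (SIGMA u:verts G. verts (H u))"
    using assms(3) by (simp add: local_resolving_set_def verts_lex_product)
  then have S: "S = (SIGMA u:verts G. T u)" and T: "\<And>u. u \<in> verts G \<Longrightarrow> T u \<subseteq> verts (H u)"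
    by (auto simp: T_def)
  have fin: "finite (verts G)" "\<And>u. u \<in> verts G \<Longrightarrow> finite (verts (H u))"
    using assms(1,2) by (auto simp: simple_graph_def)
  have "card (verts (H u)) - 1 \<le> card (T u)" if u: "u \<in> verts G" for u
  proof -
    have "a = b" if "a \<in> verts (H u) - T u" "b \<in> verts (H u) - T u" for a b
    proof (rule ccontr)
      assume "a \<noteq> b"
      with that u assms(1,2) have "true_twins (lex_product G H) (u, a) (u, b)"
        by (intro true_twins_lex_product) auto
      with that show False
        using local_resolving_set_meets_true_twins[OF simple_graph_lex_product assms(3)] assms(1,2)
        by (auto simp: T_def)
    qed
    then have "card (verts (H u) - T u) \<le> 1"
      using fin(2)[OF u] by (simp add: card_le_Suc0_iff_eq)
    moreover have "card (verts (H u) - T u) = card (verts (H u)) - card (T u)"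
      using T[OF u] fin(2)[OF u] by (meson card_Diff_subset finite_subset)
    ultimately show ?thesis by linarith
  qed
  then have "(\<Sum>u\<in>verts G. card (verts (H u)) - 1) \<le> (\<Sum>u\<in>verts G. card (T u))"
    by (rule sum_mono)
  also have "\<dots> = card S"
    unfolding S using fin T by (subst card_SigmaI) (auto intro: finite_subset)
  finally show ?thesis .
qed

lemma separating_vertex_if_not_true_twins:
  assumes "simple_graph G" and "adj G u u'" and "\<not> true_twins G u u'"
  obtains t where "t \<in> verts G" "adj G t u" "t \<noteq> u'" "\<not> adj G t u'"
    | t where "t \<in> verts G" "adj G t u'" "t \<noteq> u" "\<not> adj G t u"
proof -
  have "u \<in> verts G" "u' \<in> verts G" "u \<noteq> u'" "adj G u' u"
    using assms(1,2) by (auto simp: simple_graph_def)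
  with assms(3) obtain t where "t \<in> closed_nbhd G u \<longleftrightarrow> t \<notin> closed_nbhd G u'"
    unfolding true_twins_def by blast
  with \<open>adj G u' u\<close> assms(1,2) that show thesis
    unfolding closed_nbhd_def simple_graph_def by blast
qed

lemma local_resolving_set_lex_product:
  assumes "simple_graph G" and "\<forall>x y. \<not> true_twins G x y"
    and "\<forall>u\<in>verts G. simple_graph (H u)"
    and "\<And>u x y. u \<in> verts G \<Longrightarrow> x \<in> D u \<Longrightarrow> y \<in> D u \<Longrightarrow> \<not> adj (H u) x y"
    and "\<And>u. u \<in> verts G \<Longrightarrow> verts (H u) - D u \<noteq> {}"
  shows "local_resolving_set (lex_product G H) (SIGMA u:verts G. verts (H u) - D u)"
    (is "local_resolving_set ?P ?S")
proof -
  have P: "simple_graph ?P" using assms(1,3) by (rule simple_graph_lex_product)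
  have across: "\<exists>s\<in>?S. dist ?P s (u, v) \<noteq> dist ?P s (u', w)"
    if uv: "adj ?P (u, v) (u', w)"
      and t: "t \<in> verts G" "adj G t u" "t \<noteq> u'" "\<not> adj G t u'"
    for u v u' w t
  proof -
    obtain z where z: "z \<in> verts (H t) - D t" using assms(5) t(1) by blast
    then have "adj ?P (t, z) (u, v)" "\<not> adj ?P (t, z) (u', w)"
      using uv t by (auto simp: adj_lex_product)
    then show ?thesis
      using dist_neq_if_adj_not_adj[OF P _ uv] z t(1) by blast
  qed
  have "\<exists>s\<in>?S. dist ?P s (u, v) \<noteq> dist ?P s (u', w)" if uv: "adj ?P (u, v) (u', w)" for u v u' w
  proof (cases "u = u'")
    case True
    then have "v \<notin> D u \<or> w \<notin> D u" "u \<in> verts G" "v \<in> verts (H u)" "w \<in> verts (H u)"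
      using uv assms(1,4) by (auto simp: adj_lex_product simple_graph_def)
    then have "(u, v) \<in> ?S \<or> (u, w) \<in> ?S" by auto
    then show ?thesis using dist_endpoint_neq[OF P uv] True by blast
  next
    case False
    then have "adj G u u'" using uv by (simp add: adj_lex_product)
    then show ?thesis
    proof (rule separating_vertex_if_not_true_twins[OF assms(1) _ assms(2)[rule_format]])
      fix t assume "t \<in> verts G" "adj G t u" "t \<noteq> u'" "\<not> adj G t u'"
      then show ?thesis by (rule across[OF uv])
    next
      fix t assume "t \<in> verts G" "adj G t u'" "t \<noteq> u" "\<not> adj G t u"
      moreover have "adj ?P (u', w) (u, v)" using P uv by (simp add: simple_graph_def)
      ultimately show ?thesis using across by (metis (no_types))
    qed
  qed
  then show ?thesis
    unfolding local_resolving_set_def by (auto simp: verts_lex_product)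
qed

lemma local_metric_dim_lex_product_le:
  assumes "simple_graph G" and "\<forall>x y. \<not> true_twins G x y"
    and H: "\<forall>u\<in>verts G. simple_graph (H u) \<and> nonempty_graph (H u)"
    and D: "\<And>u. u \<in> verts G \<Longrightarrow> D u \<subseteq> verts (H u)"
    and indep: "\<And>u x y. u \<in> verts G \<Longrightarrow> x \<in> D u \<Longrightarrow> y \<in> D u \<Longrightarrow> \<not> adj (H u) x y"
  shows "local_metric_dim (lex_product G H) \<le> (\<Sum>u\<in>verts G. card (verts (H u)) - card (D u))"
proof -
  have "verts (H u) - D u \<noteq> {}" if u: "u \<in> verts G" for u
  proof -
    obtain x y where xy: "adj (H u) x y"
      using H u unfolding nonempty_graph_def by blast
    then have "x \<in> verts (H u)" "y \<in> verts (H u)"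
      using H u unfolding simple_graph_def by blast+
    with xy indep[OF u] show ?thesis by blast
  qed
  with assms have "local_resolving_set (lex_product G H) (SIGMA u:verts G. verts (H u) - D u)"
    by (intro local_resolving_set_lex_product) auto
  then have "local_metric_dim (lex_product G H) \<le> card (SIGMA u:verts G. verts (H u) - D u)"
    by (rule local_metric_dim_le)
  also have "\<dots> = (\<Sum>u\<in>verts G. card (verts (H u)) - card (D u))"
    using assms(1) H D by (intro card_Sigma_Diff) (auto simp: simple_graph_def)
  finally show ?thesis .
qed

lemma local_metric_dim_lex_product_complete:
  assumes "simple_graph G" and "\<forall>x y. \<not> true_twins G x y"
    and H: "\<forall>u\<in>verts G. simple_graph (H u) \<and> nonempty_graph (H u) \<and> is_complete (H u)"
  shows "local_metric_dim (lex_product G H) = (\<Sum>u\<in>verts G. card (verts (H u)) - 1)"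
proof (rule antisym)
  define e where "e u = (SOME v. v \<in> verts (H u))" for u
  have "e u \<in> verts (H u)" if "u \<in> verts G" for u
  proof -
    have "verts (H u) \<noteq> {}" using card_verts_ge_2[of "H u"] H that by fastforce
    then show ?thesis unfolding e_def by (simp add: some_in_eq)
  qed
  then have "local_metric_dim (lex_product G H) \<le> (\<Sum>u\<in>verts G. card (verts (H u)) - card {e u})"
    using assms(1,2) H by (intro local_metric_dim_lex_product_le) (auto simp: simple_graph_def)
  then show "local_metric_dim (lex_product G H) \<le> (\<Sum>u\<in>verts G. card (verts (H u)) - 1)"
    by simp
  show "(\<Sum>u\<in>verts G. card (verts (H u)) - 1) \<le> local_metric_dim (lex_product G H)"
  proof (rule local_metric_dim_ge)
    show "simple_graph (lex_product G H)"
      by (rule simple_graph_lex_product[OF assms(1)]) (use H in blast)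
  next
    fix S assume "local_resolving_set (lex_product G H) S"
    with assms(1) H show "(\<Sum>u\<in>verts G. card (verts (H u)) - 1) \<le> card S"
      by (intro card_local_resolving_set_lex_product_complete) blast+
  qed
qed

lemma local_metric_dim_lex_product_lt:
  assumes "simple_graph G" and "\<forall>x y. \<not> true_twins G x y"
    and H: "\<forall>u\<in>verts G. simple_graph (H u) \<and> nonempty_graph (H u)"
    and u0: "u0 \<in> verts G" and "\<not> is_complete (H u0)"
  shows "local_metric_dim (lex_product G H) < (\<Sum>u\<in>verts G. card (verts (H u)) - 1)"
proof -
  obtain a b where ab: "a \<in> verts (H u0)" "b \<in> verts (H u0)" "a \<noteq> b" "\<not> adj (H u0) a b"
    using assms(5) H u0 unfolding is_complete_def simple_graph_def by blast
  define D where "D u = (if u = u0 then {a, b} else {SOME v. v \<in> verts (H u)})" for u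
  have n: "2 \<le> card (verts (H u))" if "u \<in> verts G" for u
    using card_verts_ge_2 H that by blast
  have D: "D u \<subseteq> verts (H u)" if "u \<in> verts G" for u
  proof -
    have "verts (H u) \<noteq> {}" using n[OF that] by (metis card.empty not_numeral_le_zero)
    then show ?thesis using ab by (simp add: D_def some_in_eq)
  qed
  have "\<not> adj (H u) x y" if "u \<in> verts G" "x \<in> D u" "y \<in> D u" for u x y
    using that ab H unfolding D_def simple_graph_def by (auto split: if_splits)
  with assms(1,2) H D
  have "local_metric_dim (lex_product G H) \<le> (\<Sum>u\<in>verts G. card (verts (H u)) - card (D u))"
    by (intro local_metric_dim_lex_product_le) auto
  also have "\<dots> < (\<Sum>u\<in>verts G. card (verts (H u)) - 1)"
  proof (rule sum_strict_mono_ex1)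
    show "finite (verts G)" using assms(1) by (simp add: simple_graph_def)
    show "\<forall>u\<in>verts G. card (verts (H u)) - card (D u) \<le> card (verts (H u)) - 1"
      using ab(3) by (simp add: D_def diff_le_mono2)
    show "\<exists>u\<in>verts G. card (verts (H u)) - card (D u) < card (verts (H u)) - 1"
      using u0 n[OF u0] ab(3) by (intro bexI[of _ u0]) (auto simp: D_def)
  qed
  finally show ?thesis .
qed

theorem theorem4:
  fixes G :: "'a graph" and H :: "'a \<Rightarrow> 'b graph"
  assumes "simple_graph G" and "connected_graph G" and "card (verts G) \<ge> 2"
    and "\<forall>x y. \<not> true_twins G x y"
    and "\<forall>u\<in>verts G. simple_graph (H u) \<and> nonempty_graph (H u)"
  shows "int (local_metric_dim (lex_product G H))
           = (\<Sum>u\<in>verts G. int (card (verts (H u)))) - int (card (verts G))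
         \<longleftrightarrow> (\<forall>u\<in>verts G. graph_iso (H u) (complete_graph (card (verts (H u)))))"
proof -
  let ?k = "\<Sum>u\<in>verts G. card (verts (H u)) - 1"
  have "int ?k = (\<Sum>u\<in>verts G. int (card (verts (H u)))) - int (card (verts G))"
    using assms(5) card_verts_ge_2 by (intro of_nat_sum_diff_1) fastforce
  then have "int (local_metric_dim (lex_product G H))
           = (\<Sum>u\<in>verts G. int (card (verts (H u)))) - int (card (verts G))
         \<longleftrightarrow> local_metric_dim (lex_product G H) = ?k"
    by linarith
  also have "\<dots> \<longleftrightarrow> (\<forall>u\<in>verts G. is_complete (H u))"
    using local_metric_dim_lex_product_complete[OF assms(1,4)]
      local_metric_dim_lex_product_lt[OF assms(1,4,5)] assms(5)
    by (metis less_irrefl)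
  also have "\<dots> \<longleftrightarrow> (\<forall>u\<in>verts G. graph_iso (H u) (complete_graph (card (verts (H u)))))"
    using graph_iso_complete_graph_iff assms(5) by blast
  finally show ?thesis .
qed

end
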